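(* The assignment $H_3\mapsto E^2$, $H_1\mapsto\tilde B E$, $C_{18}\mapsto \mathrm{diag}(e^{-7i\pi/9},e^{2i\pi/9},e^{5i\pi/9})$, $C_6\mapsto\mathrm{diag}(e^{i\pi/3},-1,e^{2i\pi/3})$ extends to a group isomorphism $g:Fr(162\times 4)\to D(18,1,1;2,1,1)$. (In terms of generators, $g(C_{18})=F^2(E^2FEF^{-1})^3$ and $g(C_6)=E\,g(C_{18})E^{-2}g(C_{18})^8E^{-2}g(C_{18})^3$.) In particular $Fr(162\times 4)\cong D(18,1,1;2,1,1)$.
   Context: Let $\omega=e^{2i\pi/3}$, $J$ the $3\times3$ antidiagonal matrix with antidiagonal entries $1$. $G_1=\mathrm{diag}(e^{7i\pi/9},-e^{4i\pi/9},-e^{7i\pi/9})$, $G_2=\begin{pmatrix}-\tfrac12 e^{4i\pi/9}&\tfrac{1}{\sqrt2}e^{7i\pi/9}&\tfrac12 e^{4i\pi/9}\\ \tfrac{1}{\sqrt2}e^{7i\pi/9}&0&\tfrac{1}{\sqrt2}e^{7i\pi/9}\\ \tfrac12 e^{4i\pi/9}&\tfrac{1}{\sqrt2}e^{7i\pi/9}&-\tfrac12 e^{4i\pi/9}\end{pmatrix}$, $FUM=-\omega J$, $Fr(162\times 4)=\langle G_1,G_2,FUM\rangle\subset SU(3)$. Let $A=G_1G_2^2G_1^{-1}$, $B=G_1G_2^{-2}G_1$, $C_{18}=A(FUM)^3$, $C_6=B\,G_1(FUM)^3G_1^{-1}$, $H_1=\begin{pmatrix}-\frac12&-\frac1{\sqrt2}&-\frac12\\-\frac1{\sqrt2}&0&\frac1{\sqrt2}\\-\frac12&\frac1{\sqrt2}&-\frac12\end{pmatrix}$,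 $H_3=\begin{pmatrix}\frac12&\frac1{\sqrt2}&-\frac12\\\frac1{\sqrt2}&0&\frac1{\sqrt2}\\\frac12&-\frac1{\sqrt2}&-\frac12\end{pmatrix}$; $C_6,C_{18},H_1,H_3$ generate $Fr(162\times4)$. $D(18,1,1;2,1,1)=\langle F,E,\tilde B\rangle\subset SU(3)$ with $F=\mathrm{diag}(e^{i\pi/9},e^{i\pi/9},e^{-2i\pi/9})$, $E=\begin{pmatrix}0&1&0\\0&0&1\\1&0&0\end{pmatrix}$, $\tilde B=\begin{pmatrix}-1&0&0\\0&0&-1\\0&-1&0\end{pmatrix}$. *)

theory Defs
  imports "HOL-Analysis.Analysis" "HOL-Algebra.Group"
begin

type_synonym cmat = "complex^3^3"

definition mat3 :: "complex \<Rightarrow> complex \<Rightarrow> complex \<Rightarrow> complex \<Rightarrow> complex \<Rightarrow> complex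
                    \<Rightarrow> complex \<Rightarrow> complex \<Rightarrow> complex \<Rightarrow> cmat" where
  "mat3 a b c d e f g h i = vector [vector [a,b,c], vector [d,e,f], vector [g,h,i]]"

definition diag3 :: "complex \<Rightarrow> complex \<Rightarrow> complex \<Rightarrow> cmat" where
  "diag3 a b c = mat3 a 0 0 0 b 0 0 0 c"

primrec mpow :: "cmat \<Rightarrow> nat \<Rightarrow> cmat" where
  "mpow A 0 = mat 1"
| "mpow A (Suc n) = A ** mpow A n"

inductive_set mgen :: "cmat set \<Rightarrow> cmat set" for S where
  one: "mat 1 \<in> mgen S"
| gen: "A \<in> S \<Longrightarrow> A \<in> mgen S"
| mult: "A \<in> mgen S \<Longrightarrow> B \<in> mgen S \<Longrightarrow> A ** B \<in> mgen S"
| inv: "A \<in> mgen S \<Longrightarrow> matrix_inv A \<in> mgen S"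

definition mgroup :: "cmat set \<Rightarrow> cmat monoid" where
  "mgroup S = \<lparr>carrier = mgen S, mult = (\<lambda>A B. A ** B), one = mat 1\<rparr>"

definition \<omega> :: complex where "\<omega> = cis (2*pi/3)"
definition Jm :: cmat where "Jm = mat3 0 0 1 0 1 0 1 0 0"
definition s2 :: complex where "s2 = complex_of_real (sqrt 2)"

definition G1 :: cmat where
  "G1 = diag3 (cis (7*pi/9)) (- cis (4*pi/9)) (- cis (7*pi/9))"
definition G2 :: cmat where
  "G2 = mat3 (- cis (4*pi/9) / 2) (cis (7*pi/9) / s2) (cis (4*pi/9) / 2)
             (cis (7*pi/9) / s2) 0 (cis (7*pi/9) / s2)
             (cis (4*pi/9) / 2) (cis (7*pi/9) / s2) (- cis (4*pi/9) / 2)"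
definition FUM :: cmat where "FUM = (\<chi> i j. - \<omega> * Jm $ i $ j)"

definition Fr :: "cmat set" where "Fr = mgen {G1, G2, FUM}"

definition Am :: cmat where "Am = G1 ** mpow G2 2 ** matrix_inv G1"
definition Bm :: cmat where "Bm = G1 ** mpow (matrix_inv G2) 2 ** G1"
definition C18 :: cmat where "C18 = Am ** mpow FUM 3"
definition C6 :: cmat where "C6 = Bm ** G1 ** mpow FUM 3 ** matrix_inv G1"
definition H1 :: cmat where
  "H1 = mat3 (-1/2) (-1/s2) (-1/2)  (-1/s2) 0 (1/s2)  (-1/2) (1/s2) (-1/2)"
definition H3 :: cmat where
  "H3 = mat3 (1/2) (1/s2) (-1/2)  (1/s2) 0 (1/s2)  (1/2) (-1/s2) (-1/2)"

definition Fm :: cmat where "Fm = diag3 (cis (pi/9)) (cis (pi/9)) (cis (-2*pi/9))"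
definition Em :: cmat where "Em = mat3 0 1 0 0 0 1 1 0 0"
definition Bt :: cmat where "Bt = mat3 (-1) 0 0 0 0 (-1) 0 (-1) 0"

definition D18 :: "cmat set" where "D18 = mgen {Fm, Em, Bt}"

end

theory Submission
  imports Defs
begin

text \<open>In the basis given by the rows of \<open>P\<close> below the generators \<open>G\<^sub>1\<close>,
  \<open>G\<^sub>2\<close>, \<open>FUM\<close> become monomial matrices whose entries are powers of \<open>\<zeta> = e\<^sup>i\<^sup>\<pi>\<^sup>/\<^sup>9\<close>,
  and each of these is a word in \<open>F\<close>, \<open>E\<close>, \<open>B\<close> and conversely, so conjugation by \<open>P\<close> maps
  \<open>Fr(162\<times>4)\<close> onto \<open>D(18,1,1;2,1,1)\<close>. It sends \<open>H\<^sub>3\<close>, \<open>H\<^sub>1\<close>, \<open>C\<^sub>6\<close> to the prescribed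
  matrices, but \<open>C\<^sub>1\<^sub>8\<close> only to \<open>\<zeta>\<^sup>-\<^sup>6\<close> times its prescribed image. This is repaired by the
  central twist \<open>Y \<mapsto> \<psi>(Y)\<^sup>2 Y\<close>, where \<open>\<psi>(Y)\<close> is the common sixth power of the nonzero
  entries of the monomial matrix \<open>Y\<close>: \<open>\<psi>\<close> is a homomorphism onto the cube roots of unity
  with \<open>\<psi>(\<psi>(Y)\<^sup>2 Y) = \<psi>(Y)\<close>, so the twist is an automorphism of order 3 of \<open>D(18,1,1;2,1,1)\<close>.\<close>

lemma mat3_nth:
  "mat3 a b c d e f g h i $ 1 $ 1 = a" "mat3 a b c d e f g h i $ 1 $ 2 = b"
  "mat3 a b c d e f g h i $ 1 $ 3 = c" "mat3 a b c d e f g h i $ 2 $ 1 = d"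
  "mat3 a b c d e f g h i $ 2 $ 2 = e" "mat3 a b c d e f g h i $ 2 $ 3 = f"
  "mat3 a b c d e f g h i $ 3 $ 1 = g" "mat3 a b c d e f g h i $ 3 $ 2 = h"
  "mat3 a b c d e f g h i $ 3 $ 3 = i"
  by (simp_all add: mat3_def)

lemma mat3_mult:
  "mat3 a b c d e f g h i ** mat3 a' b' c' d' e' f' g' h' i' =
   mat3 (a*a'+b*d'+c*g') (a*b'+b*e'+c*h') (a*c'+b*f'+c*i')
        (d*a'+e*d'+f*g') (d*b'+e*e'+f*h') (d*c'+e*f'+f*i')
        (g*a'+h*d'+i*g') (g*b'+h*e'+i*h') (g*c'+h*f'+i*i')"
  by (simp add: vec_eq_iff forall_3 matrix_matrix_mult_def sum_3 mat3_nth)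

lemma mat3_scalar: "(mat c :: cmat) = mat3 c 0 0 0 c 0 0 0 c"
  by (simp add: vec_eq_iff forall_3 mat_def mat3_nth)

lemmas mat3_one = mat3_scalar[of 1]

lemma mat3_eq_iff:
  "mat3 a b c d e f g h i = mat3 a' b' c' d' e' f' g' h' i' \<longleftrightarrow>
   a = a' \<and> b = b' \<and> c = c' \<and> d = d' \<and> e = e' \<and> f = f' \<and> g = g' \<and> h = h' \<and> i = i'"
  by (metis mat3_nth)

lemma mpow_numeral: "mpow A (numeral n) = A ** mpow A (pred_numeral n)"
  by (simp add: numeral_eq_Suc)

lemma mpow_mat: "mpow (mat c) n = mat (c ^ n)"
proof (induction n)
  case (Suc n)
  have "mat c ** mat (c ^ n) = (mat (c * c ^ n) :: cmat)"
    by (simp add: mat3_scalar mat3_mult)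
  then show ?case using Suc by simp
qed simp

lemma mat_mult_nth: "(mat c ** A) $ i $ j = c * A $ i $ j"
  by (simp add: matrix_matrix_mult_def mat_def if_distrib if_distribR cong: if_cong)

lemma mult_mat_nth: "(A ** mat c) $ i $ j = A $ i $ j * c"
  by (simp add: matrix_matrix_mult_def mat_def if_distrib if_distribR cong: if_cong)

lemma mat_mult_mat: "mat a ** (mat b ** A) = mat (a * b) ** A"
  by (simp add: vec_eq_iff mat_mult_nth mult.assoc)

lemma mat_mult_commute: "mat c ** A = A ** mat (c :: 'a::comm_semiring_1)"
  by (simp add: vec_eq_iff mat_mult_nth mult_mat_nth mult.commute)

lemma matrix_inv_unique:
  fixes A B :: "'a::field^'n^'n"
  assumes "A ** B = mat 1"
  shows "matrix_inv A = B"
proof -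
  have "B ** A = mat 1" using assms matrix_left_right_inverse by blast
  then have "A ** matrix_inv A = mat 1 \<and> matrix_inv A ** A = mat 1"
    using someI[of "\<lambda>A'. A ** A' = mat 1 \<and> A' ** A = mat 1" B] assms
    unfolding matrix_inv_def by blast
  then have "matrix_inv A = matrix_inv A ** (A ** B)" using assms by simp
  also have "\<dots> = B" using \<open>_ \<and> matrix_inv A ** A = mat 1\<close> by (simp add: matrix_mul_assoc)
  finally show ?thesis .
qed

lemma invertible_matrix_inv:
  fixes A :: "'a::field^'n^'n"
  assumes "invertible A"
  shows "A ** matrix_inv A = mat 1" "matrix_inv A ** A = mat 1" "invertible (matrix_inv A)"
proof -
  obtain B where "A ** B = mat 1" "B ** A = mat 1" using assms invertible_def by blast
  then show "A ** matrix_inv A = mat 1" "matrix_inv A ** A = mat 1" "invertible (matrix_inv A)"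
    using matrix_inv_unique invertible_def by metis+
qed

lemma mgen_subset:
  assumes "S \<subseteq> mgen T"
  shows "mgen S \<subseteq> mgen T"
proof
  fix A assume "A \<in> mgen S"
  then show "A \<in> mgen T" by induction (use assms in \<open>auto intro: mgen.intros\<close>)
qed

lemma mgen_mpow: "A \<in> mgen S \<Longrightarrow> mpow A n \<in> mgen S"
  by (induction n) (auto intro: mgen.intros)

lemma mgen_invertible:
  assumes "\<forall>A\<in>S. invertible A" and "A \<in> mgen S"
  shows "invertible A"
  using assms(2)
proof (induction rule: mgen.induct)
  case one
  show ?case unfolding invertible_def by (auto intro: exI[of _ "mat 1"])
qed (use assms(1) invertible_mult invertible_matrix_inv in auto)

lemma iso_mgroupI:
  assumes "bij_betw f (mgen S) (mgen T)"
    and "\<And>A B. A \<in> mgen S \<Longrightarrow> B \<in> mgen S \<Longrightarrow> f (A ** B) = f A ** f B"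
  shows "f \<in> iso (mgroup S) (mgroup T)"
  using assms by (auto simp: iso_def hom_def mgroup_def bij_betw_def)

definition conjugate :: "'a::semiring_1^'n^'n \<Rightarrow> 'a^'n^'n \<Rightarrow> 'a^'n^'n \<Rightarrow> 'a^'n^'n" where
  "conjugate P Q X = P ** X ** Q"

context
  fixes P Q :: "'a::field^'n^'n"
  assumes PQ: "P ** Q = mat 1"
begin

lemma conjugate_mult: "conjugate P Q (A ** B) = conjugate P Q A ** conjugate P Q B"
proof -
  have "Q ** P = mat 1" using PQ matrix_left_right_inverse by blast
  then have "P ** (A ** B) ** Q = P ** A ** (Q ** P) ** B ** Q" by (simp add: matrix_mul_assoc)
  then show ?thesis by (simp add: conjugate_def matrix_mul_assoc)
qed

lemma conjugate_one: "conjugate P Q (mat 1) = mat 1"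
  by (simp add: conjugate_def PQ)

lemma conjugate_inj: "inj (conjugate P Q)"
proof (rule inj_on_inverseI)
  fix X
  have "Q ** P = mat 1" using PQ matrix_left_right_inverse by blast
  moreover have "Q ** (P ** X ** Q) ** P = (Q ** P) ** X ** (Q ** P)" by (simp add: matrix_mul_assoc)
  ultimately show "Q ** conjugate P Q X ** P = X" by (simp add: conjugate_def)
qed

lemma conjugate_invertible_iff: "invertible (conjugate P Q A) \<longleftrightarrow> invertible A"
proof
  assume "invertible (conjugate P Q A)"
  then obtain B where "conjugate P Q A ** B = mat 1" using invertible_def by blast
  then have "conjugate P Q (A ** (Q ** B ** P)) = mat 1"
    by (simp add: conjugate_mult conjugate_def matrix_mul_assoc PQ)
  then have "A ** (Q ** B ** P) = mat 1"
    using conjugate_one conjugate_inj by (metis injD)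
  then show "invertible A" using invertible_right_inverse by blast
next
  assume "invertible A"
  then have "conjugate P Q A ** conjugate P Q (matrix_inv A) = mat 1"
    by (simp add: conjugate_mult[symmetric] invertible_matrix_inv conjugate_one)
  then show "invertible (conjugate P Q A)" using invertible_right_inverse by blast
qed

lemma conjugate_matrix_inv:
  "invertible A \<Longrightarrow> conjugate P Q (matrix_inv A) = matrix_inv (conjugate P Q A)"
  by (rule matrix_inv_unique[symmetric])
    (simp add: conjugate_mult[symmetric] invertible_matrix_inv conjugate_one)

end

lemma conjugate_mpow: "P ** Q = mat 1 \<Longrightarrow> conjugate P Q (mpow A n) = mpow (conjugate P Q A) n"
  by (induction n) (simp_all add: conjugate_one conjugate_mult)

lemma conjugate_mgen:
  assumes PQ: "P ** Q = mat 1" and invertible_gens: "\<forall>A\<in>S. invertible A"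
  shows "conjugate P Q ` mgen S = mgen (conjugate P Q ` S)"
proof
  show "conjugate P Q ` mgen S \<subseteq> mgen (conjugate P Q ` S)"
  proof (rule image_subsetI)
    fix X assume "X \<in> mgen S"
    then show "conjugate P Q X \<in> mgen (conjugate P Q ` S)"
    proof (induction rule: mgen.induct)
      case (inv A)
      then show ?case
        using conjugate_matrix_inv[OF PQ mgen_invertible[OF invertible_gens]] by (auto intro: mgen.inv)
    qed (auto simp: conjugate_one[OF PQ] conjugate_mult[OF PQ] intro: mgen.intros)
  qed
  show "mgen (conjugate P Q ` S) \<subseteq> conjugate P Q ` mgen S"
  proof
    fix Y assume "Y \<in> mgen (conjugate P Q ` S)"
    then show "Y \<in> conjugate P Q ` mgen S"
    proof (induction rule: mgen.induct)
      case one
      show ?case using conjugate_one[OF PQ] by (auto intro: mgen.one image_eqI[of _ _ "mat 1"])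
    next
      case (mult A B)
      then show ?case by (auto simp: conjugate_mult[OF PQ, symmetric] intro: mgen.mult)
    next
      case (inv A)
      then obtain X where X: "X \<in> mgen S" "A = conjugate P Q X" by blast
      then have "matrix_inv A = conjugate P Q (matrix_inv X)"
        using conjugate_matrix_inv[OF PQ mgen_invertible[OF invertible_gens]] by simp
      then show ?case using X(1) by (auto intro: mgen.inv)
    qed (auto intro: mgen.gen)
  qed
qed

section \<open>The root of unity \<open>\<zeta> = e\<^sup>i\<^sup>\<pi>\<^sup>/\<^sup>9\<close>\<close>

definition \<zeta> :: complex where "\<zeta> = cis (pi / 9)"

lemma cis_multiple_pi_div_9: "cis (real k * pi / 9) = \<zeta> ^ k"
  unfolding \<zeta>_def Complex.DeMoivre by simp

lemma cis_minus_multiple_pi_div_9: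
  assumes "k \<le> 18"
  shows "cis (- (real k * pi / 9)) = \<zeta> ^ (18 - k)"
proof -
  have "cis (- (real k * pi / 9)) = cis (- (real k * pi / 9)) * cis (2 * pi)" by simp
  also have "\<dots> = cis (real (18 - k) * pi / 9)"
    unfolding cis_mult using assms by (simp add: of_nat_diff field_simps)
  finally show ?thesis by (simp add: cis_multiple_pi_div_9)
qed

lemma zeta_pow_18: "\<zeta> ^ 18 = 1"
  using cis_multiple_pi_div_9[of 18] by simp

lemma zeta_pow_9: "\<zeta> ^ 9 = -1"
  using cis_multiple_pi_div_9[of 9] by simp

lemma zeta_nonzero: "\<zeta> \<noteq> 0"
  using zeta_pow_18 by auto

lemma zeta_pow_mult_18: "\<zeta> ^ (18 * k) = 1"
  by (simp add: power_mult zeta_pow_18)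

lemma zeta_pow_reduce: "18 \<le> n \<Longrightarrow> \<zeta> ^ n = \<zeta> ^ (n - 18)"
  by (metis le_add_diff_inverse mult_1 power_add zeta_pow_18)

lemma zeta_minus: "- (\<zeta> ^ k) = \<zeta> ^ (k + 9)"
  by (simp add: power_add zeta_pow_9)

lemma zeta_mult:
  "\<zeta> ^ a * \<zeta> ^ b = \<zeta> ^ (a + b)" "\<zeta> * \<zeta> ^ b = \<zeta> ^ Suc b" "\<zeta> ^ a * \<zeta> = \<zeta> ^ Suc a"
  "\<zeta> * \<zeta> = \<zeta> ^ 2"
  "\<zeta> ^ a * (\<zeta> ^ b * x) = \<zeta> ^ (a + b) * x" "\<zeta> * (\<zeta> ^ b * x) = \<zeta> ^ Suc b * x"
  "\<zeta> ^ a * (\<zeta> * x) = \<zeta> ^ Suc a * x" "\<zeta> * (\<zeta> * x) = \<zeta> ^ 2 * x"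
  by (simp_all add: power_add power2_eq_square mult.assoc)

lemmas zeta_simps = zeta_mult zeta_pow_reduce

lemma Fm_zeta: "Fm = mat3 \<zeta> 0 0 0 \<zeta> 0 0 0 (\<zeta> ^ 16)"
  using cis_minus_multiple_pi_div_9[of 2] by (simp add: Fm_def diag3_def \<zeta>_def)

lemma Bt_zeta: "Bt = mat3 (\<zeta> ^ 9) 0 0 0 0 (\<zeta> ^ 9) 0 (\<zeta> ^ 9) 0"
  by (simp add: Bt_def zeta_pow_9)

section \<open>The change of basis\<close>

text \<open>The rows of \<open>P\<close> are eigenvectors of \<open>J\<close>, so \<open>P FUM P\<^sup>-\<^sup>1\<close> is diagonal.\<close>

definition Pm :: cmat where "Pm = mat3 0 s2 0 1 0 (-1) 1 0 1"
definition Qm :: cmat where "Qm = mat3 0 (1/2) (1/2) (s2/2) 0 0 0 (-1/2) (1/2)"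

abbreviation cj :: "cmat \<Rightarrow> cmat" where "cj \<equiv> conjugate Pm Qm"

lemma s2_square: "s2 * s2 = 2" "s2 * (s2 * x) = 2 * x"
proof -
  show "s2 * s2 = 2" unfolding s2_def of_real_mult[symmetric] by simp
  then show "s2 * (s2 * x) = 2 * x" by (simp add: mult.assoc[symmetric])
qed

lemma divide_s2: "x / s2 = x * s2 / 2"
proof -
  have "s2 \<noteq> 0" using s2_square(1) by auto
  then show ?thesis using s2_square(1) by (simp add: field_simps)
qed

lemma Pm_Qm: "Pm ** Qm = mat 1"
  by (simp add: Pm_def Qm_def mat3_mult mat3_one s2_square)

lemma cj_G1: "cj G1 = mat3 (\<zeta> ^ 13) 0 0 0 0 (\<zeta> ^ 7) 0 (\<zeta> ^ 7) 0"
proof -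
  have "cj G1 = mat3 (- (\<zeta> ^ 4)) 0 0 0 0 (\<zeta> ^ 7) 0 (\<zeta> ^ 7) 0"
    using cis_multiple_pi_div_9[of 4] cis_multiple_pi_div_9[of 7]
    by (simp add: conjugate_def Pm_def Qm_def G1_def diag3_def mat3_mult mat3_eq_iff
        algebra_simps s2_square)
  then show ?thesis by (simp add: zeta_minus)
qed

lemma cj_G2: "cj G2 = mat3 0 0 (\<zeta> ^ 7) 0 (\<zeta> ^ 13) 0 (\<zeta> ^ 7) 0 0"
proof -
  have "cj G2 = mat3 0 0 (\<zeta> ^ 7) 0 (- (\<zeta> ^ 4)) 0 (\<zeta> ^ 7) 0 0"
    using cis_multiple_pi_div_9[of 4] cis_multiple_pi_div_9[of 7]
    by (simp add: conjugate_def Pm_def Qm_def G2_def mat3_mult mat3_eq_iff divide_s2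
        algebra_simps s2_square)
  then show ?thesis by (simp add: zeta_minus)
qed

lemma cj_FUM: "cj FUM = mat3 (\<zeta> ^ 15) 0 0 0 (\<zeta> ^ 6) 0 0 0 (\<zeta> ^ 15)"
proof -
  have FUM_zeta: "FUM = mat3 0 0 (- (\<zeta> ^ 6)) 0 (- (\<zeta> ^ 6)) 0 (- (\<zeta> ^ 6)) 0 0"
    using cis_multiple_pi_div_9[of 6]
    by (simp add: FUM_def Jm_def \<omega>_def vec_eq_iff forall_3 mat3_nth)
  have "cj FUM = mat3 (- (\<zeta> ^ 6)) 0 0 0 (\<zeta> ^ 6) 0 0 0 (- (\<zeta> ^ 6))"
    unfolding FUM_zeta by (simp add: conjugate_def Pm_def Qm_def mat3_mult mat3_eq_iff algebra_simps s2_square)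
  then show ?thesis by (simp add: zeta_minus)
qed

lemma cj_H1: "cj H1 = Bt ** Em"
  by (simp add: conjugate_def Pm_def Qm_def H1_def Bt_def Em_def mat3_mult mat3_eq_iff divide_s2
      algebra_simps s2_square)

lemma cj_H3: "cj H3 = mpow Em 2"
  by (simp add: conjugate_def Pm_def Qm_def H3_def Em_def mpow_numeral mat3_one mat3_mult
      mat3_eq_iff divide_s2 algebra_simps s2_square)

lemma cj_generators_right_inverse:
  "cj G1 ** mat3 (\<zeta> ^ 5) 0 0 0 0 (\<zeta> ^ 11) 0 (\<zeta> ^ 11) 0 = mat 1"
  "cj G2 ** mat3 0 0 (\<zeta> ^ 11) 0 (\<zeta> ^ 5) 0 (\<zeta> ^ 11) 0 0 = mat 1"
  "cj FUM ** mat3 (\<zeta> ^ 3) 0 0 0 (\<zeta> ^ 12) 0 0 0 (\<zeta> ^ 3) = mat 1"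
  by (simp_all add: cj_G1 cj_G2 cj_FUM mat3_mult mat3_one zeta_simps)

lemma invertible_Fr_generators: "\<forall>A\<in>{G1, G2, FUM}. invertible A"
  using cj_generators_right_inverse conjugate_invertible_iff[OF Pm_Qm] invertible_right_inverse
  by blast

lemma conjugate_generators_D18: "mgen (cj ` {G1, G2, FUM}) = D18"
proof
  have words: "cj G1 = Fm ** Fm ** Bt ** Fm ** Fm"
    "cj G2 = Fm ** Fm ** Em ** Bt ** Fm ** Fm"
    "cj FUM = Fm ** Fm ** Fm ** Em ** Em ** Fm ** Fm ** Fm ** Em"
    by (simp_all add: cj_G1 cj_G2 cj_FUM Fm_zeta Bt_zeta Em_def mat3_mult zeta_simps)
  have "cj G1 \<in> D18" "cj G2 \<in> D18" "cj FUM \<in> D18"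
    unfolding D18_def words by (intro mgen.mult mgen.gen; simp)+
  then show "mgen (cj ` {G1, G2, FUM}) \<subseteq> D18"
    unfolding D18_def by (intro mgen_subset) auto
  have words': "Fm = cj G1 ** cj FUM ** cj G1 ** cj G2 ** cj G2"
    "Em = cj G2 ** cj G1 ** cj G1 ** cj G2 ** cj G2 ** cj G1 ** cj FUM ** cj FUM"
    "Bt = cj G1 ** cj G1 ** cj G1 ** cj FUM ** cj FUM ** cj FUM ** cj FUM"
    by (simp_all add: cj_G1 cj_G2 cj_FUM Fm_zeta Bt_zeta Em_def mat3_mult zeta_simps)
  have "Fm \<in> mgen (cj ` {G1, G2, FUM})" "Em \<in> mgen (cj ` {G1, G2, FUM})"
    "Bt \<in> mgen (cj ` {G1, G2, FUM})"
    unfolding words' by (intro mgen.mult mgen.gen; simp)+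
  then have "{Fm, Em, Bt} \<subseteq> mgen (cj ` {G1, G2, FUM})" by simp
  then show "D18 \<subseteq> mgen (cj ` {G1, G2, FUM})"
    unfolding D18_def by (rule mgen_subset)
qed

lemma conjugate_Fr: "cj ` Fr = D18"
  unfolding Fr_def conjugate_mgen[OF Pm_Qm invertible_Fr_generators] conjugate_generators_D18 ..

lemma cj_iso: "cj \<in> iso (mgroup {G1, G2, FUM}) (mgroup {Fm, Em, Bt})"
proof (rule iso_mgroupI)
  show "bij_betw cj (mgen {G1, G2, FUM}) (mgen {Fm, Em, Bt})"
    using conjugate_Fr conjugate_inj[OF Pm_Qm]
    unfolding Fr_def D18_def bij_betw_def by (metis inj_on_subset subset_UNIV)
qed (simp add: conjugate_mult[OF Pm_Qm])

section \<open>Monomial matrices and the twist\<close>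

definition monomial_matrix :: "('n \<Rightarrow> 'n) \<Rightarrow> ('n \<Rightarrow> 'a) \<Rightarrow> 'a::semiring_1^'n^'n" where
  "monomial_matrix s d = (\<chi> i j. if j = s i then d i else 0)"

lemma monomial_matrix_mult:
  "monomial_matrix s d ** monomial_matrix t e = monomial_matrix (t \<circ> s) (\<lambda>i. d i * e (s i))"
proof -
  have "(\<Sum>k\<in>UNIV. (if k = s i then d i else 0) * (if j = t k then e k else 0))
      = (\<Sum>k\<in>UNIV. if k = s i then d i * (if j = t k then e k else 0) else 0)" for i j
    by (rule sum.cong) auto
  then show ?thesis by (simp add: monomial_matrix_def matrix_matrix_mult_def vec_eq_iff)
qed

lemma monomial_matrix_id: "monomial_matrix id (\<lambda>_. 1) = mat 1"
  by (simp add: monomial_matrix_def mat_def vec_eq_iff)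

lemma monomial_matrix_right_inverse:
  fixes d :: "'n::finite \<Rightarrow> 'a::field"
  assumes "inj s" and "\<And>i. d i \<noteq> 0"
  shows "monomial_matrix s d ** monomial_matrix (Hilbert_Choice.inv s)
           (\<lambda>i. inverse (d (Hilbert_Choice.inv s i))) = mat 1"
proof -
  have "Hilbert_Choice.inv s \<circ> s = id" using assms(1) by (rule inv_o_cancel)
  moreover have "(\<lambda>i. d i * inverse (d (Hilbert_Choice.inv s (s i)))) = (\<lambda>_. 1)"
    using assms by auto
  ultimately show ?thesis by (simp only: monomial_matrix_mult monomial_matrix_id)
qed

definition zeta_monomial :: "cmat \<Rightarrow> bool" where
  "zeta_monomial Y \<longleftrightarrow> (\<exists>s d k. inj s \<and> (\<forall>i. d i ^ 6 = \<zeta> ^ (6 * k)) \<and> Y = monomial_matrix s d)"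

text \<open>The first row of a monomial matrix has a single nonzero entry, so on \<open>zeta_monomial\<close>
  matrices \<open>\<psi>\<close> is the common sixth power of the nonzero entries.\<close>

definition \<psi> :: "cmat \<Rightarrow> complex" where "\<psi> Y = (\<Sum>j\<in>UNIV. Y $ 1 $ j) ^ 6"

definition twist :: "cmat \<Rightarrow> cmat" where "twist Y = mat (\<psi> Y ^ 2) ** Y"

lemma \<psi>_monomial_matrix: "(\<And>i. d i ^ 6 = c) \<Longrightarrow> \<psi> (monomial_matrix s d) = c"
  by (simp add: \<psi>_def monomial_matrix_def)

lemma \<psi>_scalar_mult: "\<psi> (mat c ** Y) = c ^ 6 * \<psi> Y"
  by (simp add: \<psi>_def mat_mult_nth sum_distrib_left[symmetric] power_mult_distrib)

lemma zeta_monomial_\<psi>: "zeta_monomial Y \<Longrightarrow> \<exists>k. \<psi> Y = \<zeta> ^ (6 * k)"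
  unfolding zeta_monomial_def using \<psi>_monomial_matrix by blast

lemma zeta_monomial_\<psi>_cube:
  assumes "zeta_monomial Y"
  shows "\<psi> Y ^ 3 = 1"
proof -
  obtain k where "\<psi> Y = \<zeta> ^ (6 * k)" using zeta_monomial_\<psi>[OF assms] by blast
  then have "\<psi> Y ^ 3 = \<zeta> ^ (18 * k)" by (simp flip: power_mult add: mult.commute)
  then show ?thesis by (simp add: zeta_pow_mult_18)
qed

lemma zeta_monomial_mult:
  assumes "zeta_monomial A" "zeta_monomial B"
  shows "zeta_monomial (A ** B)" "\<psi> (A ** B) = \<psi> A * \<psi> B"
proof -
  obtain s d k where A: "inj s" "\<And>i. d i ^ 6 = \<zeta> ^ (6 * k)" "A = monomial_matrix s d"
    using assms(1) zeta_monomial_def by auto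
  obtain t e l where B: "inj t" "\<And>i. e i ^ 6 = \<zeta> ^ (6 * l)" "B = monomial_matrix t e"
    using assms(2) zeta_monomial_def by auto
  have AB: "A ** B = monomial_matrix (t \<circ> s) (\<lambda>i. d i * e (s i))"
    using A(3) B(3) monomial_matrix_mult by simp
  have entries: "(d i * e (s i)) ^ 6 = \<zeta> ^ (6 * (k + l))" for i
    by (simp add: power_mult_distrib A(2) B(2) power_add)
  show "zeta_monomial (A ** B)"
    unfolding zeta_monomial_def AB using entries inj_compose[OF B(1) A(1)]
    by (intro exI[of _ "t \<circ> s"] exI[of _ "\<lambda>i. d i * e (s i)"] exI[of _ "k + l"]) auto
  have "\<psi> (A ** B) = \<zeta> ^ (6 * (k + l))"
    unfolding AB by (rule \<psi>_monomial_matrix) (rule entries)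
  moreover have "\<psi> A = \<zeta> ^ (6 * k)" "\<psi> B = \<zeta> ^ (6 * l)"
    unfolding A(3) B(3) by (rule \<psi>_monomial_matrix, rule A(2), rule \<psi>_monomial_matrix, rule B(2))
  ultimately show "\<psi> (A ** B) = \<psi> A * \<psi> B" by (simp add: power_add)
qed

lemma zeta_monomial_matrix_inv:
  assumes "zeta_monomial A"
  shows "zeta_monomial (matrix_inv A)"
proof -
  obtain s d k where A: "inj s" "\<And>i. d i ^ 6 = \<zeta> ^ (6 * k)" "A = monomial_matrix s d"
    using assms zeta_monomial_def by auto
  have "d i \<noteq> 0" for i
  proof
    assume "d i = 0"
    then show False using A(2)[of i] zeta_nonzero by simp
  qed
  then have "matrix_inv A = monomial_matrix (Hilbert_Choice.inv s) (\<lambda>i. inverse (d (Hilbert_Choice.inv s i)))"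
    unfolding A(3) by (intro matrix_inv_unique monomial_matrix_right_inverse A(1))
  moreover have "inverse (d i) ^ 6 = \<zeta> ^ (6 * (2 * k))" for i
  proof -
    have "\<zeta> ^ (6 * k) * \<zeta> ^ (6 * (2 * k)) = \<zeta> ^ (18 * k)" by (simp flip: power_add)
    then have "inverse (\<zeta> ^ (6 * k)) = \<zeta> ^ (6 * (2 * k))"
      by (intro inverse_unique) (simp add: zeta_pow_mult_18)
    then show ?thesis by (simp add: power_inverse A(2))
  qed
  moreover have "inj (Hilbert_Choice.inv s)"
    using finite_UNIV_inj_surj[OF finite_class.finite_UNIV A(1)] by (rule surj_imp_inj_inv)
  ultimately show ?thesis unfolding zeta_monomial_def
    by (intro exI[of _ "Hilbert_Choice.inv s"] exI[of _ "\<lambda>i. inverse (d (Hilbert_Choice.inv s i))"]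
        exI[of _ "2 * k"]) simp
qed

lemma zeta_monomial_one: "zeta_monomial (mat 1)"
  unfolding zeta_monomial_def monomial_matrix_id[symmetric]
  by (intro exI[of _ id] exI[of _ "\<lambda>_. 1"] exI[of _ 0]) auto

lemma zeta_monomial_Fm: "zeta_monomial Fm"
proof -
  have "Fm = monomial_matrix id (\<lambda>i. if i = 3 then \<zeta> ^ 16 else \<zeta>)"
    by (simp add: Fm_zeta vec_eq_iff forall_3 monomial_matrix_def mat3_nth)
  moreover have "(if i = 3 then \<zeta> ^ 16 else \<zeta>) ^ 6 = \<zeta> ^ (6 * 1)" for i :: 3
    by (simp add: power_mult[symmetric] zeta_pow_reduce)
  ultimately show ?thesis unfolding zeta_monomial_def
    by (intro exI[of _ id] exI[of _ "\<lambda>i::3. if i = 3 then \<zeta> ^ 16 else \<zeta>"] exI[of _ 1]) auto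
qed

lemma zeta_monomial_Em: "zeta_monomial Em"
proof -
  have "Em = monomial_matrix (\<lambda>i. i + 1) (\<lambda>_. 1)"
    by (simp add: Em_def vec_eq_iff forall_3 monomial_matrix_def mat3_nth)
  moreover have "inj (\<lambda>i::3. i + 1)" by (simp add: inj_def)
  ultimately show ?thesis unfolding zeta_monomial_def
    by (intro exI[of _ "\<lambda>i::3. i + 1"] exI[of _ "\<lambda>_. 1"] exI[of _ 0]) auto
qed

lemma zeta_monomial_Bt: "zeta_monomial Bt"
proof -
  have "Bt = monomial_matrix (\<lambda>i. 2 - i) (\<lambda>_. \<zeta> ^ 9)"
    by (simp add: Bt_zeta vec_eq_iff forall_3 monomial_matrix_def mat3_nth)
  moreover have "inj (\<lambda>i::3. 2 - i)" by (simp add: inj_def)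
  moreover have "(\<zeta> ^ 9) ^ 6 = \<zeta> ^ (6 * 0)" by (simp add: power_mult[symmetric] zeta_pow_reduce)
  ultimately show ?thesis unfolding zeta_monomial_def
    by (intro exI[of _ "\<lambda>i::3. 2 - i"] exI[of _ "\<lambda>_. \<zeta> ^ 9"] exI[of _ 0]) auto
qed

lemma D18_zeta_monomial: "Y \<in> D18 \<Longrightarrow> zeta_monomial Y"
  unfolding D18_def
proof (induction rule: mgen.induct)
  case (gen A)
  then show ?case using zeta_monomial_Fm zeta_monomial_Em zeta_monomial_Bt by auto
qed (simp_all add: zeta_monomial_one zeta_monomial_mult zeta_monomial_matrix_inv)

lemma scalar_in_D18: "mat (\<zeta> ^ (6 * k)) \<in> D18"
proof -
  have "mpow Fm 6 = mat (\<zeta> ^ 6)"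
    by (simp add: mpow_numeral Fm_zeta mat3_mult mat3_one mat3_scalar zeta_simps)
  then have "mat (\<zeta> ^ (6 * k)) = mpow (mpow Fm 6) k" by (simp add: mpow_mat power_mult)
  then show ?thesis unfolding D18_def by (simp add: mgen_mpow mgen.gen)
qed

lemma twist_mult:
  assumes "zeta_monomial A" "zeta_monomial B"
  shows "twist (A ** B) = twist A ** twist B"
proof -
  have "(mat a ** A) ** (mat b ** B) = mat (a * b) ** (A ** B)" for a b :: complex
  proof -
    have "(mat a ** A) ** (mat b ** B) = mat a ** ((A ** mat b) ** B)"
      by (simp only: matrix_mul_assoc)
    also have "\<dots> = mat a ** (mat b ** (A ** B))"
      by (subst mat_mult_commute[of b A, symmetric]) (simp only: matrix_mul_assoc)
    finally show ?thesis by (simp only: mat_mult_mat)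
  qed
  then show ?thesis
    using assms by (simp add: twist_def zeta_monomial_mult power_mult_distrib)
qed

lemma twist_in_D18:
  assumes "Y \<in> D18"
  shows "twist Y \<in> D18"
proof -
  obtain k where "\<psi> Y = \<zeta> ^ (6 * k)" using zeta_monomial_\<psi> D18_zeta_monomial assms by blast
  then have "\<psi> Y ^ 2 = \<zeta> ^ (6 * (2 * k))" by (simp flip: power_mult add: mult.commute)
  then show ?thesis
    using scalar_in_D18[of "2 * k"] assms unfolding twist_def D18_def by (simp add: mgen.mult)
qed

lemma \<psi>_twist:
  assumes "zeta_monomial Y"
  shows "\<psi> (twist Y) = \<psi> Y"
proof -
  have "(\<psi> Y ^ 2) ^ 6 = (\<psi> Y ^ 3) ^ 4" by (simp flip: power_mult)
  then show ?thesis by (simp add: twist_def \<psi>_scalar_mult zeta_monomial_\<psi>_cube[OF assms])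
qed

lemma twist_order_3:
  assumes "Y \<in> D18"
  shows "twist (twist (twist Y)) = Y"
proof -
  have "zeta_monomial Y" "zeta_monomial (twist Y)"
    using assms twist_in_D18 D18_zeta_monomial by auto
  then have \<psi>_twists: "\<psi> (twist Y) = \<psi> Y" "\<psi> (twist (twist Y)) = \<psi> Y"
    using \<psi>_twist by simp_all
  have t3: "twist (twist (twist Y)) = mat (\<psi> Y ^ 2) ** twist (twist Y)"
    by (simp only: twist_def[of "twist (twist Y)"] \<psi>_twists(2))
  have t2: "twist (twist Y) = mat (\<psi> Y ^ 2) ** twist Y"
    by (simp only: twist_def[of "twist Y"] \<psi>_twists(1))
  have "\<psi> Y ^ 2 * (\<psi> Y ^ 2 * \<psi> Y ^ 2) = (\<psi> Y ^ 3) ^ 2" by algebra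
  also have "\<dots> = 1" using zeta_monomial_\<psi>_cube[OF \<open>zeta_monomial Y\<close>] by simp
  finally have "mat (\<psi> Y ^ 2) ** (mat (\<psi> Y ^ 2) ** (mat (\<psi> Y ^ 2) ** Y)) = Y"
    by (simp add: mat_mult_mat)
  then show ?thesis unfolding t3 unfolding t2 unfolding twist_def[of Y] .
qed

lemma twist_iso: "twist \<in> iso (mgroup {Fm, Em, Bt}) (mgroup {Fm, Em, Bt})"
proof (rule iso_mgroupI)
  show "bij_betw twist (mgen {Fm, Em, Bt}) (mgen {Fm, Em, Bt})"
    using twist_order_3 twist_in_D18 unfolding D18_def
    by (intro bij_betwI[of _ _ _ "twist \<circ> twist"]) auto
qed (simp add: twist_mult D18_zeta_monomial D18_def)

lemma invertible_G1_G2: "invertible G1" "invertible G2"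
  using invertible_Fr_generators by simp_all

lemma cj_C18: "cj C18 = mat3 (\<zeta> ^ 5) 0 0 0 (\<zeta> ^ 14) 0 0 0 (\<zeta> ^ 17)"
  unfolding C18_def Am_def conjugate_mult[OF Pm_Qm] conjugate_mpow[OF Pm_Qm]
    conjugate_matrix_inv[OF Pm_Qm invertible_G1_G2(1)]
    matrix_inv_unique[OF cj_generators_right_inverse(1)]
  by (simp add: cj_G1 cj_G2 cj_FUM mpow_numeral mat3_mult mat3_one zeta_simps)

lemma cj_C6: "cj C6 = mat3 (\<zeta> ^ 3) 0 0 0 (\<zeta> ^ 9) 0 0 0 (\<zeta> ^ 6)"
  unfolding C6_def Bm_def conjugate_mult[OF Pm_Qm] conjugate_mpow[OF Pm_Qm]
    conjugate_matrix_inv[OF Pm_Qm invertible_G1_G2(1)] conjugate_matrix_inv[OF Pm_Qm invertible_G1_G2(2)]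
    matrix_inv_unique[OF cj_generators_right_inverse(1)]
    matrix_inv_unique[OF cj_generators_right_inverse(2)]
  by (simp add: cj_G1 cj_G2 cj_FUM mpow_numeral mat3_mult mat3_one zeta_simps)

lemma twist_fixed: "\<psi> Y = 1 \<Longrightarrow> twist Y = Y"
  by (simp add: twist_def)

lemma \<psi>_mat3: "\<psi> (mat3 a b c d e f g h i) = (a + b + c) ^ 6"
  by (simp add: \<psi>_def sum_3 mat3_nth)

lemma twist_cj_C18: "twist (cj C18) = mat3 (\<zeta> ^ 11) 0 0 0 (\<zeta> ^ 2) 0 0 0 (\<zeta> ^ 5)"
  by (simp add: cj_C18 twist_def \<psi>_mat3 mat3_scalar mat3_mult power_mult[symmetric] zeta_simps)

lemma twist_cj_C6: "twist (cj C6) = mat3 (\<zeta> ^ 3) 0 0 0 (\<zeta> ^ 9) 0 0 0 (\<zeta> ^ 6)"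
  unfolding cj_C6 by (rule twist_fixed) (simp add: \<psi>_mat3 power_mult[symmetric] zeta_simps)

lemma twist_cj_H1: "twist (cj H1) = Bt ** Em"
  unfolding cj_H1 by (rule twist_fixed) (simp add: Bt_def Em_def mat3_mult \<psi>_mat3)

lemma twist_cj_H3: "twist (cj H3) = mpow Em 2"
  unfolding cj_H3 by (rule twist_fixed) (simp add: Em_def mpow_numeral mat3_one mat3_mult \<psi>_mat3)

lemma diag3_C18_image:
  "diag3 (cis (-7*pi/9)) (cis (2*pi/9)) (cis (5*pi/9)) = mat3 (\<zeta> ^ 11) 0 0 0 (\<zeta> ^ 2) 0 0 0 (\<zeta> ^ 5)"
  using cis_minus_multiple_pi_div_9[of 7] cis_multiple_pi_div_9[of 2] cis_multiple_pi_div_9[of 5]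
  by (simp add: diag3_def)

lemma diag3_C6_image:
  "diag3 (cis (pi/3)) (-1) (cis (2*pi/3)) = mat3 (\<zeta> ^ 3) 0 0 0 (\<zeta> ^ 9) 0 0 0 (\<zeta> ^ 6)"
  using cis_multiple_pi_div_9[of 3] cis_multiple_pi_div_9[of 6]
  by (simp add: diag3_def zeta_pow_9)

lemma C18_image_word:
  "mpow Fm 2 ** mpow (mpow Em 2 ** Fm ** Em ** matrix_inv Fm) 3
     = mat3 (\<zeta> ^ 11) 0 0 0 (\<zeta> ^ 2) 0 0 0 (\<zeta> ^ 5)"
proof -
  have "matrix_inv Fm = mat3 (\<zeta> ^ 17) 0 0 0 (\<zeta> ^ 17) 0 0 0 (\<zeta> ^ 2)"
    by (rule matrix_inv_unique) (simp add: Fm_zeta mat3_mult mat3_one zeta_simps)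
  then show ?thesis by (simp add: Fm_zeta Em_def mpow_numeral mat3_mult mat3_one zeta_simps)
qed

lemma C6_image_word:
  fixes Y :: cmat
  assumes "Y = mat3 (\<zeta> ^ 11) 0 0 0 (\<zeta> ^ 2) 0 0 0 (\<zeta> ^ 5)"
  shows "Em ** Y ** matrix_inv (mpow Em 2) ** mpow Y 8 ** matrix_inv (mpow Em 2) ** mpow Y 3
           = mat3 (\<zeta> ^ 3) 0 0 0 (\<zeta> ^ 9) 0 0 0 (\<zeta> ^ 6)"
proof -
  have "matrix_inv (mpow Em 2) = Em"
    by (rule matrix_inv_unique) (simp add: Em_def mpow_numeral mat3_mult mat3_one)
  then show ?thesis using assms by (simp add: Em_def mpow_numeral mat3_mult mat3_one zeta_simps)
qed

theorem theorem8:
  shows "\<exists>g. g \<in> iso (mgroup {G1, G2, FUM}) (mgroup {Fm, Em, Bt})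
            \<and> g H3 = mpow Em 2
            \<and> g H1 = Bt ** Em
            \<and> g C18 = diag3 (cis (-7*pi/9)) (cis (2*pi/9)) (cis (5*pi/9))
            \<and> g C6 = diag3 (cis (pi/3)) (-1) (cis (2*pi/3))
            \<and> g C18 = mpow Fm 2 ** mpow (mpow Em 2 ** Fm ** Em ** matrix_inv Fm) 3
            \<and> g C6 = Em ** g C18 ** matrix_inv (mpow Em 2) ** mpow (g C18) 8
                       ** matrix_inv (mpow Em 2) ** mpow (g C18) 3"
proof (intro exI[of _ "twist \<circ> cj"] conjI)
  show "twist \<circ> cj \<in> iso (mgroup {G1, G2, FUM}) (mgroup {Fm, Em, Bt})"
    using cj_iso twist_iso by (rule iso_set_trans)
qed (simp_all only: o_apply twist_cj_H3 twist_cj_H1 twist_cj_C18 twist_cj_C6 diag3_C18_image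
       diag3_C6_image C18_image_word C6_image_word)

end
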